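(* Let $\mathcal H=L^2([0,1])$ and for $t\in[0,1]$ let $\phi_t=\chi_{[0,t]}$. Then $\{\phi_t\}_{t\in[0,1]}$ is a continuous Bessel family over $[0,1]$ with Lebesgue measure, and there is no Lebesgue measurable set $E\subset[0,1]$ such that $S_{\phi,E}=\tfrac12 S_{\phi,[0,1]}$.
   Context: A family $\{\phi_t\}_{t\in X}$ of vectors in $\mathcal H$ is a continuous Bessel family (with bound $B$) over the measure space $(X,\mu)$ if (i) for each $f\in\mathcal H$ the function $t\mapsto\langle f,\phi_t\rangle$ is measurable, and (ii) there is $B<\infty$ with $\int_X|\langle f,\phi_t\rangle|^2\,d\mu(t)\le B\|f\|^2$ for all $f\in\mathcal H$. For measurable $E\subset X$, the partial frame operator is $S_{\phi,E}f=\int_E\langle f,\phi_t\rangle\phi_t\,d\mu(t)$ (defined weakly), $f\in\mathcal H$. Here $\chi_A$ denotes the indicator function of $A$. *)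

theory Defs
  imports "HOL-Analysis.Analysis"
begin

definition L2_01 :: "(real \<Rightarrow> complex) set" where
  "L2_01 = {f. f \<in> borel_measurable (lebesgue_on {0..1}) \<and>
               integrable (lebesgue_on {0..1}) (\<lambda>x. (cmod (f x))\<^sup>2)}"

definition l2_inner :: "(real \<Rightarrow> complex) \<Rightarrow> (real \<Rightarrow> complex) \<Rightarrow> complex" where
  "l2_inner f g = (LINT x|lebesgue_on {0..1}. f x * cnj (g x))"

definition l2_norm :: "(real \<Rightarrow> complex) \<Rightarrow> real" where
  "l2_norm f = sqrt (LINT x|lebesgue_on {0..1}. (cmod (f x))\<^sup>2)"

definition cont_bessel_bound :: "'a measure \<Rightarrow> ('a \<Rightarrow> real \<Rightarrow> complex) \<Rightarrow> real \<Rightarrow> bool" where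
  "cont_bessel_bound M \<phi> B \<longleftrightarrow>
     (\<forall>t\<in>space M. \<phi> t \<in> L2_01) \<and>
     (\<forall>f\<in>L2_01. (\<lambda>t. l2_inner f (\<phi> t)) \<in> borel_measurable M) \<and>
     (\<forall>f\<in>L2_01. (\<integral>\<^sup>+ t. ennreal ((cmod (l2_inner f (\<phi> t)))\<^sup>2) \<partial>M)
                    \<le> ennreal (B * (l2_norm f)\<^sup>2))"

definition cont_bessel :: "'a measure \<Rightarrow> ('a \<Rightarrow> real \<Rightarrow> complex) \<Rightarrow> bool" where
  "cont_bessel M \<phi> \<longleftrightarrow> (\<exists>B. cont_bessel_bound M \<phi> B)"

text \<open>The partial frame operator S_{phi,E}, defined weakly:
  partial_frame_form M phi E f g = <S_{phi,E} f, g>.\<close>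

definition partial_frame_form ::
  "'a measure \<Rightarrow> ('a \<Rightarrow> real \<Rightarrow> complex) \<Rightarrow> 'a set \<Rightarrow> (real \<Rightarrow> complex) \<Rightarrow> (real \<Rightarrow> complex) \<Rightarrow> complex" where
  "partial_frame_form M \<phi> E f g =
     (LINT t:E|M. l2_inner f (\<phi> t) * l2_inner (\<phi> t) g)"

end

theory Submission
  imports Defs
begin

text \<open>The Bessel bound holds with constant 1, since \<open>|<f, \<phi> t>| \<le> \<parallel>f\<parallel>\<^sub>1 \<le> \<parallel>f\<parallel>\<^sub>2\<close> on the
  probability space \<open>[0,1]\<close>. For the second claim, test the weak identity on the bumps
  \<open>f\<^sub>n = n \<chi>[r, r + 1/n]\<close>: the coefficient \<open><f\<^sub>n, \<phi> t>\<close> is a ramp in \<open>t\<close> converging to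
  \<open>\<chi>(r,\<infinity>)(t)\<close> for \<open>t \<noteq> r\<close>, so by dominated convergence \<open><S E f\<^sub>n, f\<^sub>n> \<rightarrow> |E \<inter> (r,1]|\<close>.
  Hence \<open>S E = S [0,1] / 2\<close> forces \<open>|E \<inter> (r,1]| = (1 - r)/2\<close> for all \<open>r\<close>. Tails determine a
  finite measure, so \<open>|E \<inter> A| = |[0,1] \<inter> A|/2\<close> for every Borel set \<open>A\<close>; taking \<open>A = E\<close> gives
  \<open>|E| = 0\<close>, whereas \<open>r = 0\<close> gives \<open>|E| = 1/2\<close>.\<close>

abbreviation lebesgue01 :: "real measure" where
  "lebesgue01 \<equiv> lebesgue_on {0..1}"

lemma sets_lebesgue01_iff: "A \<in> sets lebesgue01 \<longleftrightarrow> A \<in> sets lebesgue \<and> A \<subseteq> {0..1}"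
  by (auto simp: sets_restrict_space_iff)

lemma borel_measurable_lebesgue01:
  "f \<in> borel_measurable borel \<Longrightarrow> f \<in> borel_measurable lebesgue01"
  by (intro measurable_restrict_space1 measurable_completion) simp

section \<open>The Bessel bound\<close>

lemma integral_square_le_integral_of_square:
  fixes g :: "'a \<Rightarrow> real"
  assumes "emeasure M (space M) = 1" "integrable M g" "integrable M (\<lambda>x. (g x)\<^sup>2)"
  shows "(\<integral>x. g x \<partial>M)\<^sup>2 \<le> (\<integral>x. (g x)\<^sup>2 \<partial>M)"
proof -
  interpret finite_measure M
    using assms(1) by (intro finite_measureI) simp
  define c where "c = (\<integral>x. g x \<partial>M)"
  have "0 \<le> (\<integral>x. (g x - c)\<^sup>2 \<partial>M)"
    by simp
  also have "\<dots> = (\<integral>x. (g x)\<^sup>2 - 2 * c * g x + c\<^sup>2 \<partial>M)"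
    by (simp add: power2_diff algebra_simps)
  also have "\<dots> = (\<integral>x. (g x)\<^sup>2 \<partial>M) - 2 * c * c + c\<^sup>2 * measure M (space M)"
    using assms(2,3) by (simp add: c_def)
  also have "\<dots> = (\<integral>x. (g x)\<^sup>2 \<partial>M) - c\<^sup>2"
    using assms(1) by (simp add: measure_def power2_eq_square)
  finally show ?thesis
    by (simp add: c_def)
qed

lemma L2_01_integrable:
  assumes "f \<in> L2_01"
  shows "integrable lebesgue01 f"
proof -
  have f: "f \<in> borel_measurable lebesgue01" "integrable lebesgue01 (\<lambda>x. (cmod (f x))\<^sup>2)"
    using assms by (auto simp: L2_01_def)
  have "integrable lebesgue01 (\<lambda>x. cmod (f x))"
    by (rule finite_measure.square_integrable_imp_integrable[OF finite_measure_lebesgue_on])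
       (use f in auto)
  then show ?thesis
    using f(1) integrable_norm_iff by blast
qed

lemma L1_norm_le_l2_norm:
  assumes "f \<in> L2_01"
  shows "(\<integral>x. cmod (f x) \<partial>lebesgue01) \<le> l2_norm f"
  unfolding l2_norm_def
proof (rule real_le_rsqrt)
  show "(\<integral>x. cmod (f x) \<partial>lebesgue01)\<^sup>2 \<le> (\<integral>x. (cmod (f x))\<^sup>2 \<partial>lebesgue01)"
    by (rule integral_square_le_integral_of_square)
       (use assms L2_01_integrable[OF assms] in \<open>simp_all add: L2_01_def emeasure_restrict_space\<close>)
qed

lemma l2_inner_indicator:
  "l2_inner f (indicator A) = (\<integral>x. f x * indicator A x \<partial>lebesgue01)"
  unfolding l2_inner_def by (rule Bochner_Integration.integral_cong) (auto simp: indicator_def)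

lemma indicator_in_L2_01:
  assumes "A \<in> sets lebesgue"
  shows "(indicator A :: real \<Rightarrow> complex) \<in> L2_01"
proof -
  have "(indicator A :: real \<Rightarrow> complex) \<in> borel_measurable lebesgue01"
    using assms by (intro measurable_restrict_space1) simp
  moreover have "integrable lebesgue01 (\<lambda>x. (cmod (indicator A x :: complex))\<^sup>2)"
  proof (rule Bochner_Integration.integrable_bound[where f="\<lambda>_. 1::real"])
    show "(\<lambda>x. (cmod (indicator A x :: complex))\<^sup>2) \<in> borel_measurable lebesgue01"
      using assms by (intro borel_measurable_power borel_measurable_norm measurable_restrict_space1) simp
  qed (auto simp: indicator_def)
  ultimately show ?thesis
    by (simp add: L2_01_def)
qed

lemma norm_l2_inner_indicator_le:
  assumes "f \<in> L2_01" "A \<in> sets lebesgue"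
  shows "cmod (l2_inner f (indicator A)) \<le> l2_norm f"
proof -
  have "f \<in> borel_measurable lebesgue01"
    using assms(1) by (simp add: L2_01_def)
  moreover have "(indicator A :: real \<Rightarrow> complex) \<in> borel_measurable lebesgue01"
    using assms(2) by (intro measurable_restrict_space1) simp
  ultimately have "(\<lambda>x. f x * indicator A x) \<in> borel_measurable lebesgue01"
    by (rule borel_measurable_times)
  then have "integrable lebesgue01 (\<lambda>x. f x * indicator A x)"
    by (rule Bochner_Integration.integrable_bound[OF L2_01_integrable[OF assms(1)]])
       (auto simp: indicator_def)
  then have "cmod (l2_inner f (indicator A)) \<le> (\<integral>x. cmod (f x) \<partial>lebesgue01)"
    unfolding l2_inner_indicator
    by (rule Bochner_Integration.integral_norm_bound_integral)
       (use L2_01_integrable[OF assms(1)] in \<open>auto simp: indicator_def norm_mult\<close>)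
  also have "\<dots> \<le> l2_norm f"
    using assms(1) by (rule L1_norm_le_l2_norm)
  finally show ?thesis .
qed

lemma borel_measurable_l2_inner_indicator_Icc:
  assumes "f \<in> L2_01"
  shows "(\<lambda>t. l2_inner f (indicator {0..t})) \<in> borel_measurable lebesgue01"
proof -
  have [measurable]: "f \<in> borel_measurable lebesgue01"
    using assms by (simp add: L2_01_def)
  have [measurable]: "(\<lambda>x::real. x) \<in> borel_measurable lebesgue01"
    by (rule borel_measurable_lebesgue01) simp
  have "(\<lambda>(t, x). if 0 \<le> x \<and> x \<le> t then f x else 0)
          \<in> borel_measurable (lebesgue01 \<Otimes>\<^sub>M lebesgue01)"
    by measurable
  then have "(\<lambda>t. \<integral>x. (if 0 \<le> x \<and> x \<le> t then f x else 0) \<partial>lebesgue01)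
               \<in> borel_measurable lebesgue01"
    using finite_measure_lebesgue_on[of "{0..1}"]
    by (intro sigma_finite_measure.borel_measurable_lebesgue_integral)
       (auto simp: finite_measure_def)
  also have "(\<lambda>t. \<integral>x. (if 0 \<le> x \<and> x \<le> t then f x else 0) \<partial>lebesgue01)
               = (\<lambda>t. l2_inner f (indicator {0..t}))"
    unfolding l2_inner_def by (intro ext Bochner_Integration.integral_cong) (auto simp: indicator_def)
  finally show ?thesis .
qed

lemma cont_bessel_bound_indicator_Icc:
  "cont_bessel_bound lebesgue01 (\<lambda>t. indicator {0..t}) 1"
  unfolding cont_bessel_bound_def
proof (intro conjI ballI)
  fix f :: "real \<Rightarrow> complex"
  assume f: "f \<in> L2_01"
  show "(\<lambda>t. l2_inner f (indicator {0..t})) \<in> borel_measurable lebesgue01"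
    using f by (rule borel_measurable_l2_inner_indicator_Icc)
  have "(\<integral>\<^sup>+ t. ennreal ((cmod (l2_inner f (indicator {0..t})))\<^sup>2) \<partial>lebesgue01)
      \<le> (\<integral>\<^sup>+ t. ennreal ((l2_norm f)\<^sup>2) \<partial>lebesgue01)"
    using norm_l2_inner_indicator_le[OF f]
    by (intro nn_integral_mono ennreal_leI power_mono) auto
  also have "\<dots> = ennreal ((l2_norm f)\<^sup>2)"
    by (simp add: emeasure_restrict_space)
  finally show "(\<integral>\<^sup>+ t. ennreal ((cmod (l2_inner f (indicator {0..t})))\<^sup>2) \<partial>lebesgue01)
      \<le> ennreal (1 * (l2_norm f)\<^sup>2)"
    by simp
qed (simp add: indicator_in_L2_01)

section \<open>Testing the partial frame operator on bumps\<close>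

definition bump :: "nat \<Rightarrow> real \<Rightarrow> real \<Rightarrow> complex" where
  "bump n r x = of_nat n * indicator {r..r + 1 / real n} x"

definition ramp :: "nat \<Rightarrow> real \<Rightarrow> real \<Rightarrow> real" where
  "ramp n r t = (if r \<le> t then real n * (min (r + 1 / real n) t - r) else 0)"

lemma measure_lebesgue01_Icc:
  assumes "0 \<le> a" "a \<le> b" "b \<le> 1"
  shows "measure lebesgue01 {a..b} = b - a"
proof -
  have "measure lebesgue01 {a..b} = measure lebesgue {a..b}"
    using assms by (subst measure_restrict_space) auto
  then show ?thesis
    using assms by (simp add: measure_completion)
qed

lemma bump_in_L2_01: "bump n r \<in> L2_01"
proof -
  have "bump n r \<in> borel_measurable lebesgue01"
    unfolding bump_def by (rule borel_measurable_lebesgue01) measurable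
  moreover have "integrable lebesgue01 (\<lambda>x. (cmod (bump n r x))\<^sup>2)"
  proof (rule Bochner_Integration.integrable_bound[where f="\<lambda>_. (real n)\<^sup>2"])
    show "(\<lambda>x. (cmod (bump n r x))\<^sup>2) \<in> borel_measurable lebesgue01"
      using \<open>bump n r \<in> borel_measurable lebesgue01\<close> by measurable
  qed (auto simp: bump_def indicator_def)
  ultimately show ?thesis
    by (simp add: L2_01_def)
qed

lemma l2_inner_bump_indicator_Icc:
  assumes "0 \<le> r" "t \<le> 1"
  shows "l2_inner (bump n r) (indicator {0..t}) = of_real (ramp n r t)"
proof (cases "r \<le> t")
  case True
  define b where "b = min (r + 1 / real n) t"
  have "l2_inner (bump n r) (indicator {0..t})
      = (\<integral>x. of_real (real n * indicator {r..b} x) \<partial>lebesgue01)"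
    unfolding l2_inner_indicator
    by (rule Bochner_Integration.integral_cong) (use assms in \<open>auto simp: bump_def b_def indicator_def\<close>)
  also have "\<dots> = of_real (real n * measure lebesgue01 {r..b})"
    using assms True by (simp add: b_def Int_absorb2)
  also have "measure lebesgue01 {r..b} = b - r"
    using assms True by (intro measure_lebesgue01_Icc) (auto simp: b_def)
  finally show ?thesis
    using True by (simp add: ramp_def b_def)
next
  case False
  have "l2_inner (bump n r) (indicator {0..t}) = (\<integral>x. 0 \<partial>lebesgue01)"
    unfolding l2_inner_indicator
    by (rule Bochner_Integration.integral_cong) (use False in \<open>auto simp: bump_def indicator_def\<close>)
  then show ?thesis
    using False by (simp add: ramp_def)
qed

lemma ramp_nonneg: "0 \<le> ramp n r t"
  by (simp add: ramp_def)

lemma ramp_le_one: "ramp n r t \<le> 1"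
proof (cases "n = 0")
  case False
  have "real n * (min (r + 1 / real n) t - r) \<le> real n * (1 / real n)"
    by (intro mult_left_mono) auto
  with False show ?thesis
    by (simp add: ramp_def)
qed (simp add: ramp_def)

lemma ramp_tendsto_indicator:
  assumes "t \<noteq> r"
  shows "(\<lambda>n. ramp n r t) \<longlonglongrightarrow> indicator {r<..} t"
proof (cases "t < r")
  case True
  then show ?thesis
    by (simp add: ramp_def)
next
  case False
  with assms have "r < t"
    by simp
  have "\<forall>\<^sub>F n in sequentially. 1 / real n < t - r"
    using \<open>r < t\<close> by real_asymp
  moreover have "\<forall>\<^sub>F n in sequentially. 0 < n"
    by (rule eventually_gt_at_top)
  ultimately have "\<forall>\<^sub>F n in sequentially. ramp n r t = 1"
    by eventually_elim (use \<open>r < t\<close> in \<open>auto simp: ramp_def\<close>)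
  then have "(\<lambda>n. ramp n r t) \<longlonglongrightarrow> 1"
    by (rule tendsto_eventually)
  then show ?thesis
    using \<open>r < t\<close> by simp
qed

lemma l2_inner_cnj: "l2_inner g f = cnj (l2_inner f g)"
proof -
  have "l2_inner g f = (\<integral>x. cnj (f x * cnj (g x)) \<partial>lebesgue01)"
    unfolding l2_inner_def by (simp add: mult.commute)
  also have "\<dots> = cnj (l2_inner f g)"
    unfolding l2_inner_def by (rule Bochner_Integration.integral_cnj)
  finally show ?thesis .
qed

lemma partial_frame_form_bump:
  assumes "0 \<le> r"
  shows "partial_frame_form lebesgue01 (\<lambda>t. indicator {0..t}) A (bump n r) (bump n r)
       = of_real (\<integral>t. indicator A t * (ramp n r t)\<^sup>2 \<partial>lebesgue01)"
proof -
  have "partial_frame_form lebesgue01 (\<lambda>t. indicator {0..t}) A (bump n r) (bump n r)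
       = (\<integral>t. of_real (indicator A t * (ramp n r t)\<^sup>2) \<partial>lebesgue01)"
    unfolding partial_frame_form_def set_lebesgue_integral_def
    using assms
    by (intro Bochner_Integration.integral_cong)
       (auto simp: l2_inner_cnj[of "indicator _"] l2_inner_bump_indicator_Icc
          scaleR_conv_of_real power2_eq_square)
  then show ?thesis
    by (simp only: integral_complex_of_real)
qed

lemma tendsto_integral_ramp_squared:
  assumes "A \<in> sets lebesgue01"
  shows "(\<lambda>n. \<integral>t. indicator A t * (ramp n r t)\<^sup>2 \<partial>lebesgue01) \<longlonglongrightarrow> measure lebesgue (A \<inter> {r<..})"
proof -
  have [measurable]: "A \<in> sets lebesgue01" "(\<lambda>t::real. t) \<in> borel_measurable lebesgue01"
    using assms by (auto intro: borel_measurable_lebesgue01)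
  have "A \<inter> {r<..} \<inter> space lebesgue01 = A \<inter> {r<..}"
    using assms by (auto simp: sets_lebesgue01_iff)
  have "(\<lambda>n. \<integral>t. indicator A t * (ramp n r t)\<^sup>2 \<partial>lebesgue01)
          \<longlonglongrightarrow> (\<integral>t. indicator A t * indicator {r<..} t \<partial>lebesgue01)"
  proof (rule integral_dominated_convergence[where w="\<lambda>_. 1"])
    show "(\<lambda>t. indicator A t * (ramp n r t)\<^sup>2) \<in> borel_measurable lebesgue01" for n
      unfolding ramp_def by measurable
    have "AE t in lebesgue. t \<noteq> r"
      by (rule AE_completion) (rule AE_lborel_singleton)
    then have "AE t in lebesgue01. t \<noteq> r"
      by (subst AE_restrict_space_iff) (auto elim: eventually_mono)
    then show "AE t in lebesgue01.
        (\<lambda>n. indicator A t * (ramp n r t)\<^sup>2) \<longlonglongrightarrow> indicator A t * indicator {r<..} t"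
    proof eventually_elim
      case (elim t)
      have "(indicator {r<..} t :: real)\<^sup>2 = indicator {r<..} t"
        by (simp add: indicator_def)
      moreover have "(\<lambda>n. (ramp n r t)\<^sup>2) \<longlonglongrightarrow> (indicator {r<..} t)\<^sup>2"
        using elim by (intro tendsto_power ramp_tendsto_indicator)
      ultimately show ?case
        by (intro tendsto_mult_left) simp
    qed
    show "AE t in lebesgue01. norm (indicator A t * (ramp n r t)\<^sup>2) \<le> 1" for n
      using ramp_nonneg ramp_le_one by (intro AE_I2) (auto simp: indicator_def power_le_one)
  qed auto
  also have "(\<integral>t. indicator A t * indicator {r<..} t \<partial>lebesgue01) = measure lebesgue01 (A \<inter> {r<..})"
    using \<open>A \<inter> {r<..} \<inter> space lebesgue01 = A \<inter> {r<..}\<close>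
    by (simp add: indicator_inter_arith[symmetric])
  also have "\<dots> = measure lebesgue (A \<inter> {r<..})"
    using assms by (subst measure_restrict_space) (auto simp: sets_lebesgue01_iff)
  finally show ?thesis .
qed

lemma tendsto_partial_frame_form_bump:
  assumes "0 \<le> r" "A \<in> sets lebesgue01"
  shows "(\<lambda>n. partial_frame_form lebesgue01 (\<lambda>t. indicator {0..t}) A (bump n r) (bump n r))
           \<longlonglongrightarrow> of_real (measure lebesgue (A \<inter> {r<..}))"
  unfolding partial_frame_form_bump[OF assms(1)]
  using assms(2) by (intro tendsto_of_real tendsto_integral_ramp_squared)

lemma measure_tail_eq_if_partial_frame_form_eq:
  assumes E: "E \<in> sets lebesgue01"
    and eq: "\<forall>f\<in>L2_01. \<forall>g\<in>L2_01.
      partial_frame_form lebesgue01 (\<lambda>t. indicator {0..t}) E f g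
      = of_real c * partial_frame_form lebesgue01 (\<lambda>t. indicator {0..t}) {0..1} f g"
    and r: "0 \<le> r" "r \<le> 1"
  shows "measure lebesgue (E \<inter> {r<..}) = c * (1 - r)"
proof -
  have "{0..1} \<in> sets lebesgue01"
    by (simp add: sets_lebesgue01_iff)
  then have "(\<lambda>n. partial_frame_form lebesgue01 (\<lambda>t. indicator {0..t}) E (bump n r) (bump n r))
      \<longlonglongrightarrow> of_real c * of_real (measure lebesgue ({0..1} \<inter> {r<..}))"
    unfolding eq[rule_format, OF bump_in_L2_01 bump_in_L2_01]
    by (intro tendsto_mult_left tendsto_partial_frame_form_bump r)
  moreover have "{0..1} \<inter> {r<..} = {r<..1}"
    using r by auto
  ultimately have "of_real (measure lebesgue (E \<inter> {r<..})) = (of_real (c * (1 - r)) :: complex)"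
    using r LIMSEQ_unique[OF tendsto_partial_frame_form_bump[OF r(1) E]]
    by (simp add: measure_completion)
  then show ?thesis
    by (rule of_real_eq_iff[THEN iffD1])
qed

section \<open>Sets with proportional tails\<close>

lemma proportional_tails_imp_zero_or_one:
  fixes S :: "real set" and c :: real
  assumes S: "S \<in> sets borel" "S \<subseteq> {0..1}" and "0 \<le> c"
    and tail: "\<And>x. emeasure lborel (S \<inter> {x<..}) = c * emeasure lborel ({0..1} \<inter> {x<..})"
  shows "c = 0 \<or> c = 1"
proof -
  let ?\<mu> = "density lborel (indicator S)"
  let ?\<nu> = "scale_measure (ennreal c) (density lborel (indicator {0..1::real}))"
  have \<mu>: "emeasure ?\<mu> A = emeasure lborel (S \<inter> A)" if "A \<in> sets borel" for A
    using S that by (intro emeasure_restricted) simp_all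
  have "?\<mu> = ?\<nu>"
  proof (rule measure_eqI_lessThan)
    show "emeasure ?\<mu> {x<..} < \<infinity>" for x
    proof -
      have "emeasure lborel (S \<inter> {x<..}) \<le> emeasure lborel {0..1::real}"
        using S by (intro emeasure_mono) auto
      also have "\<dots> < \<infinity>"
        by simp
      finally show ?thesis
        by (simp add: \<mu>)
    qed
  qed (simp_all add: \<mu> tail emeasure_restricted)
  then have "emeasure lborel S = c * emeasure lborel S"
    using \<mu>[of S] S by (simp add: emeasure_restricted Int_absorb1 Int_absorb2)
  moreover have "emeasure lborel S = c"
  proof -
    have "S \<inter> {-1<..} = S" "{0..1} \<inter> {-1<..} = {0..1::real}"
      using S by auto
    then show ?thesis
      using tail[of "-1"] by simp
  qed
  ultimately have "ennreal c = ennreal (c * c)"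
    using \<open>0 \<le> c\<close> by (simp add: ennreal_mult)
  then have "c = c * c"
    using \<open>0 \<le> c\<close> by simp
  then show ?thesis
    by auto
qed

text \<open>Tails determine a measure only on the Borel sets (\<open>measure_eqI_lessThan\<close>), so a
  Lebesgue set is replaced by a Borel subset of full measure.\<close>

lemma lebesgue_set_borel_part:
  assumes "E \<in> sets lebesgue"
  obtains S where "S \<in> sets borel" "S \<subseteq> E"
    "\<And>A. A \<in> sets borel \<Longrightarrow> emeasure lebesgue (E \<inter> A) = emeasure lborel (S \<inter> A)"
proof -
  obtain S N N' where E: "E = S \<union> N" "N \<subseteq> N'" "N' \<in> null_sets lborel" "S \<in> sets lborel"
    using assms by (rule sets_completionE)
  have N: "N \<in> null_sets lebesgue"
    using E(2) null_sets_completionI[OF E(3)] by (rule null_sets_completion_subset)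
  have "emeasure lebesgue (E \<inter> A) = emeasure lborel (S \<inter> A)" if "A \<in> sets borel" for A
  proof -
    have "E \<inter> A = S \<inter> A \<union> N \<inter> A"
      using E(1) by blast
    moreover have "N \<inter> A \<in> null_sets lebesgue"
      using N that by (intro null_set_Int2) simp_all
    ultimately have "emeasure lebesgue (E \<inter> A) = emeasure lebesgue (S \<inter> A)"
      using E(4) that by (simp add: emeasure_Un_null_set)
    then show ?thesis
      using E(4) that by simp
  qed
  with E show ?thesis
    by (intro that[of S]) auto
qed

lemma measure_tails_proportional_imp_zero_or_one:
  fixes E :: "real set" and c :: real
  assumes E: "E \<in> sets lebesgue" "E \<subseteq> {0..1}" and "0 \<le> c"
    and tail: "\<And>r. 0 \<le> r \<Longrightarrow> r \<le> 1 \<Longrightarrow> measure lebesgue (E \<inter> {r<..}) = c * (1 - r)"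
  shows "c = 0 \<or> c = 1"
proof -
  have tail01: "emeasure lebesgue (E \<inter> {x<..}) = c * emeasure lborel ({0..1} \<inter> {x<..})"
    if "0 \<le> x" "x \<le> 1" for x
  proof -
    have "emeasure lebesgue (E \<inter> {x<..}) \<le> emeasure lebesgue {0..1::real}"
      using E by (intro emeasure_mono) auto
    then have "emeasure lebesgue (E \<inter> {x<..}) = ennreal (measure lebesgue (E \<inter> {x<..}))"
      by (intro emeasure_eq_ennreal_measure) (auto simp: top_unique)
    also have "\<dots> = ennreal (c * (1 - x))"
      using that by (simp add: tail)
    also have "\<dots> = c * emeasure lborel {x<..1}"
      using \<open>0 \<le> c\<close> that by (simp add: ennreal_mult)
    also have "{x<..1} = {0..1} \<inter> {x<..}"
      using that by auto
    finally show ?thesis .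
  qed
  have tail_all: "emeasure lebesgue (E \<inter> {x<..}) = c * emeasure lborel ({0..1} \<inter> {x<..})" for x
  proof -
    consider "x < 0" | "0 \<le> x" "x \<le> 1" | "1 < x"
      by linarith
    then show ?thesis
    proof cases
      case 1
      have "AE t in lebesgue. t \<noteq> 0"
        by (rule AE_completion) (rule AE_lborel_singleton)
      then have "AE t in lebesgue. t \<in> E \<inter> {x<..} \<longleftrightarrow> t \<in> E \<inter> {0<..}"
        by eventually_elim (use E 1 in auto)
      then have "emeasure lebesgue (E \<inter> {x<..}) = emeasure lebesgue (E \<inter> {0<..})"
        using E by (intro emeasure_eq_AE) auto
      moreover have "{0..1} \<inter> {x<..} = {0..1::real}" "{0..1} \<inter> {0<..} = {0<..1::real}"
        using 1 by auto
      ultimately show ?thesis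
        using tail01[of 0] by simp
    next
      case 3
      then have "E \<inter> {x<..} = {}" "{0..1} \<inter> {x<..} = {}"
        using E by auto
      then show ?thesis
        by simp
    qed (rule tail01)
  qed
  obtain S where S: "S \<in> sets borel" "S \<subseteq> E"
    "\<And>A. A \<in> sets borel \<Longrightarrow> emeasure lebesgue (E \<inter> A) = emeasure lborel (S \<inter> A)"
    using lebesgue_set_borel_part[OF E(1)] by blast
  show ?thesis
  proof (rule proportional_tails_imp_zero_or_one)
    show "S \<subseteq> {0..1}"
      using S(2) E(2) by blast
    show "emeasure lborel (S \<inter> {x<..}) = c * emeasure lborel ({0..1} \<inter> {x<..})" for x
      using S(3)[of "{x<..}"] tail_all[of x] by simp
  qed (use S(1) \<open>0 \<le> c\<close> in auto)
qed

theorem mainTheorem9: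
  defines "\<phi> \<equiv> (\<lambda>(t::real) (x::real). (indicator {0..t} x :: complex))"
  shows "cont_bessel (lebesgue_on {0..1}) \<phi> \<and>
    \<not> (\<exists>E. E \<in> sets (lebesgue_on {0..1}) \<and>
          (\<forall>f\<in>L2_01. \<forall>g\<in>L2_01.
             partial_frame_form (lebesgue_on {0..1}) \<phi> E f g =
             (1/2) * partial_frame_form (lebesgue_on {0..1}) \<phi> {0..1} f g))"
proof (intro conjI notI)
  show "cont_bessel lebesgue01 \<phi>"
    unfolding cont_bessel_def \<phi>_def using cont_bessel_bound_indicator_Icc by blast
next
  assume "\<exists>E. E \<in> sets lebesgue01 \<and> (\<forall>f\<in>L2_01. \<forall>g\<in>L2_01.
    partial_frame_form lebesgue01 \<phi> E f g = (1/2) * partial_frame_form lebesgue01 \<phi> {0..1} f g)"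
  then obtain E where E: "E \<in> sets lebesgue01"
    and eq: "\<forall>f\<in>L2_01. \<forall>g\<in>L2_01.
      partial_frame_form lebesgue01 (\<lambda>t. indicator {0..t}) E f g
      = of_real (1/2) * partial_frame_form lebesgue01 (\<lambda>t. indicator {0..t}) {0..1} f g"
    unfolding \<phi>_def by auto
  have "(1/2::real) = 0 \<or> (1/2::real) = 1"
    using E measure_tail_eq_if_partial_frame_form_eq[OF E eq]
    by (intro measure_tails_proportional_imp_zero_or_one[of E]) (auto simp: sets_lebesgue01_iff)
  then show False
    by simp
qed

end
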